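(* Let $\mu$ be the law of a ferromagnetic $q$-state Potts model on a finite graph $G=(V,E)$, i.e. $\mu(\mathrm s)\propto\exp\big(-J\sum_{\{v_1,v_2\}\in E}\mathbf 1\{\mathrm s(v_1)\neq \mathrm s(v_2)\}\big)$ on $\mathrm s\in Q^V$ with $|Q|=q$ and $J\ge0$. Then for all $A,B\subseteq V$, $$\mu(\mathrm s\text{ constant on }A\text{ and constant on }B)\ge\mu(\mathrm s\text{ constant on }A)\,\mu(\mathrm s\text{ constant on }B),$$ and $$\mu(\mathrm s\text{ constant on }A\cup B)\ge\tfrac1q\,\mu(\mathrm s\text{ constant on }A\text{ and constant on }B).$$
   Context: A spin configuration is constant on a set $A$ if it takes a single value on $A$ (the condition is vacuous for $|A|\le1$). *)

theory Defs
  imports "HOL-Analysis.Analysis" "HOL-Library.FuncSet"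
begin

definition const_on :: "('v \<Rightarrow> 'q) \<Rightarrow> 'v set \<Rightarrow> bool" where
  "const_on s A \<longleftrightarrow> (\<forall>x\<in>A. \<forall>y\<in>A. s x = s y)"

text \<open>Configurations: functions V \<rightarrow> Q (extensional, so the set is finite).\<close>
definition configs :: "'v set \<Rightarrow> 'q set \<Rightarrow> ('v \<Rightarrow> 'q) set" where
  "configs V Q = (V \<rightarrow>\<^sub>E Q)"

definition potts_weight :: "real \<Rightarrow> 'v set set \<Rightarrow> ('v \<Rightarrow> 'q) \<Rightarrow> real" where
  "potts_weight J E s =
     exp (- J * real (card {e \<in> E. \<exists>v1 v2. e = {v1, v2} \<and> s v1 \<noteq> s v2}))"

definition potts_Z :: "real \<Rightarrow> 'v set \<Rightarrow> 'v set set \<Rightarrow> 'q set \<Rightarrow> real" where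
  "potts_Z J V E Q = (\<Sum>s\<in>configs V Q. potts_weight J E s)"

definition potts_prob ::
  "real \<Rightarrow> 'v set \<Rightarrow> 'v set set \<Rightarrow> 'q set \<Rightarrow> (('v \<Rightarrow> 'q) \<Rightarrow> bool) \<Rightarrow> real" where
  "potts_prob J V E Q P =
     (\<Sum>s\<in>{s\<in>configs V Q. P s}. potts_weight J E s) / potts_Z J V E Q"

definition finite_graph :: "'v set \<Rightarrow> 'v set set \<Rightarrow> bool" where
  "finite_graph V E \<longleftrightarrow> finite V \<and> (\<forall>e\<in>E. e \<subseteq> V \<and> card e = 2)"

end

theory Submission
  imports Defs
begin

text \<open>Write r = exp (-J) and p = 1 - r. Expanding every edge factor
  exp (-J [s v1 \<noteq> s v2]) = r + p [s v1 = s v2] (the Edwards--Sokal coupling) writes the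
  unnormalised mass of the event that s is constant on every member of a family C as the sum,
  over open-edge sets \<omega> \<subseteq> E, of p^|\<omega>| r^|E - \<omega>| N(\<omega> \<union> C), where N counts the
  configurations constant on every member of a family. Constancy on A is constancy on the pairs
  {a0, x} for x \<in> A. N(C) is q to the number of connected components of the graph C, so N is
  log-supermodular, while the edge weights are log-modular; the four functions theorem of
  Ahlswede and Daykin then gives the first inequality. For the second, constancy on A \<union> B adds
  the single pair {a, b} with a \<in> A and b \<in> B, and adding a pair either leaves N unchanged
  or divides it by q.\<close>

definition configs_const_on :: "'v set \<Rightarrow> 'q set \<Rightarrow> 'v set set \<Rightarrow> ('v \<Rightarrow> 'q) set" where
  "configs_const_on V Q C = {s \<in> configs V Q. \<forall>e\<in>C. const_on s e}"

definition vertex_pairs :: "'v set \<Rightarrow> 'v set set" where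
  "vertex_pairs V = {{u, v} | u v. u \<in> V \<and> v \<in> V}"

lemma vertex_pairs_subset_Pow: "vertex_pairs V \<subseteq> Pow V"
  unfolding vertex_pairs_def by auto

lemma configs_const_on_insert_pair:
  "configs_const_on V Q (insert {u, v} C) = {s \<in> configs_const_on V Q C. s u = s v}"
  unfolding configs_const_on_def const_on_def by auto

lemma configs_const_on_insert_pair_eq:
  "\<forall>s\<in>configs_const_on V Q C. s u = s v
    \<Longrightarrow> configs_const_on V Q (insert {u, v} C) = configs_const_on V Q C"
  by (auto simp: configs_const_on_insert_pair)

lemma configs_const_on_antimono:
  "C \<subseteq> D \<Longrightarrow> configs_const_on V Q D \<subseteq> configs_const_on V Q C"
  unfolding configs_const_on_def by auto

lemma finite_configs_const_on:
  "finite V \<Longrightarrow> finite Q \<Longrightarrow> finite (configs_const_on V Q C)"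
  unfolding configs_const_on_def configs_def
  by (rule finite_subset[of _ "V \<rightarrow>\<^sub>E Q"]) (auto intro: finite_PiE)

lemma card_configs_const_on_pos:
  assumes "finite V" "finite Q" "Q \<noteq> {}" "C \<subseteq> Pow V"
  shows "card (configs_const_on V Q C) > 0"
proof -
  obtain b where "b \<in> Q" using assms(3) by auto
  then have "(\<lambda>w\<in>V. b) \<in> configs_const_on V Q C"
    using assms(4) unfolding configs_const_on_def configs_def const_on_def by auto
  then show ?thesis using finite_configs_const_on[OF assms(1,2)] card_gt_0_iff by blast
qed

definition forced_class :: "'v set \<Rightarrow> 'q set \<Rightarrow> 'v set set \<Rightarrow> 'v \<Rightarrow> 'v set" where
  "forced_class V Q C u = {w \<in> V. \<forall>s \<in> configs_const_on V Q C. s w = s u}"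

lemma recolour_forced_class:
  assumes "C \<subseteq> Pow V" and t: "t \<in> configs_const_on V Q C" and "b \<in> Q"
  shows "(\<lambda>w. if w \<in> forced_class V Q C u then b else t w) \<in> configs_const_on V Q C"
proof -
  let ?W = "forced_class V Q C u"
  have closed: "z \<in> ?W" if "e \<in> C" "z \<in> e" "z' \<in> e" "z' \<in> ?W" for e z z'
  proof -
    have "s z = s u" if "s \<in> configs_const_on V Q C" for s
    proof -
      have "s z = s z'"
        using \<open>s \<in> configs_const_on V Q C\<close> \<open>e \<in> C\<close> \<open>z \<in> e\<close> \<open>z' \<in> e\<close>
        unfolding configs_const_on_def const_on_def by blast
      also have "\<dots> = s u" using \<open>z' \<in> ?W\<close> that unfolding forced_class_def by blast
      finally show ?thesis .
    qed
    moreover have "z \<in> V" using assms(1) \<open>e \<in> C\<close> \<open>z \<in> e\<close> by blast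
    ultimately show ?thesis unfolding forced_class_def by blast
  qed
  have "const_on (\<lambda>w. if w \<in> ?W then b else t w) e" if "e \<in> C" for e
  proof (cases "e \<subseteq> ?W")
    case True
    then show ?thesis unfolding const_on_def by auto
  next
    case False
    then have outside: "w \<notin> ?W" if "w \<in> e" for w using closed[OF \<open>e \<in> C\<close> _ that] by blast
    have "const_on t e" using t that unfolding configs_const_on_def by blast
    then show ?thesis using outside unfolding const_on_def by metis
  qed
  moreover have "?W \<subseteq> V" unfolding forced_class_def by auto
  ultimately show ?thesis
    using t \<open>b \<in> Q\<close> unfolding configs_const_on_def configs_def
    by (auto simp: PiE_iff extensional_def)
qed

text \<open>Recolouring the forced class of u is a bijection from the configurations with
  s u = s v, paired with a colour, onto all configurations; the witness s0 puts v outside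
  that class.\<close>
lemma card_configs_const_on_insert_pair:
  fixes V :: "'v set" and Q :: "'q set"
  assumes "C \<subseteq> Pow V" "u \<in> V" "v \<in> V"
    and "s0 \<in> configs_const_on V Q C" "s0 u \<noteq> s0 v"
  shows "card (configs_const_on V Q C) = card (configs_const_on V Q (insert {u, v} C)) * card Q"
proof -
  let ?X = "configs_const_on V Q C" and ?Y = "configs_const_on V Q (insert {u, v} C)"
  let ?W = "forced_class V Q C u"
  have uW: "u \<in> ?W" using assms(2) unfolding forced_class_def by auto
  have vW: "v \<notin> ?W" using assms(4,5) unfolding forced_class_def by force
  define recolour :: "('v \<Rightarrow> 'q) \<times> 'q \<Rightarrow> 'v \<Rightarrow> 'q"
    where "recolour = (\<lambda>(s, b) w. if w \<in> ?W then b else s w)"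
  define decompose :: "('v \<Rightarrow> 'q) \<Rightarrow> ('v \<Rightarrow> 'q) \<times> 'q"
    where "decompose = (\<lambda>t. (\<lambda>w. if w \<in> ?W then t v else t w, t u))"
  have Q_values: "t u \<in> Q" "t v \<in> Q" if "t \<in> ?X" for t
    using that assms(2,3) unfolding configs_const_on_def configs_def by auto
  have "bij_betw recolour (?Y \<times> Q) ?X"
  proof (rule bij_betw_byWitness[where f' = decompose])
    show "\<forall>p\<in>?Y \<times> Q. decompose (recolour p) = p"
    proof clarify
      fix s b assume "s \<in> ?Y" "b \<in> Q"
      then have "s \<in> ?X" "s u = s v" by (simp_all add: configs_const_on_insert_pair)
      then have "s w = s v" if "w \<in> ?W" for w
        using that unfolding forced_class_def by auto
      then show "decompose (recolour (s, b)) = (s, b)"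
        using uW vW unfolding decompose_def recolour_def by auto
    qed
    show "\<forall>t\<in>?X. recolour (decompose t) = t"
      unfolding decompose_def recolour_def forced_class_def by (auto simp: fun_eq_iff)
    show "recolour ` (?Y \<times> Q) \<subseteq> ?X"
      using recolour_forced_class[OF assms(1)] unfolding recolour_def
      by (auto simp: configs_const_on_insert_pair)
    show "decompose ` ?X \<subseteq> ?Y \<times> Q"
      using recolour_forced_class[OF assms(1) _ Q_values(2)] Q_values(1) uW vW
      unfolding decompose_def by (auto simp: configs_const_on_insert_pair)
  qed
  then show ?thesis by (metis bij_betw_same_card card_cartesian_product)
qed

lemma card_configs_const_on_insert_pair_cases:
  assumes "C \<subseteq> Pow V" "u \<in> V" "v \<in> V"
  obtains "\<forall>s\<in>configs_const_on V Q C. s u = s v"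
  | "card (configs_const_on V Q C) = card (configs_const_on V Q (insert {u, v} C)) * card Q"
  using card_configs_const_on_insert_pair[OF assms] by blast

lemma card_configs_const_on_le_insert_pair:
  assumes "C \<subseteq> Pow V" "u \<in> V" "v \<in> V" "finite Q" "Q \<noteq> {}"
  shows "card (configs_const_on V Q C) \<le> card Q * card (configs_const_on V Q (insert {u, v} C))"
proof (cases rule: card_configs_const_on_insert_pair_cases[OF assms(1-3), of Q])
  case 1
  moreover have "card Q \<ge> 1" using assms(4,5) by (simp add: Suc_le_eq card_gt_0_iff)
  ultimately show ?thesis by (simp add: configs_const_on_insert_pair_eq)
qed simp

text \<open>Adding {u, v} divides the count by q unless u and v are already forced equal, and being
  forced equal persists when constraints are added.\<close>
lemma card_configs_const_on_insert_pair_mono: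
  assumes "finite Q" "Q \<noteq> {}" "C \<subseteq> D" "D \<subseteq> Pow V" "u \<in> V" "v \<in> V"
  shows "card (configs_const_on V Q D) * card (configs_const_on V Q (insert {u, v} C))
       \<le> card (configs_const_on V Q C) * card (configs_const_on V Q (insert {u, v} D))"
proof (cases rule: card_configs_const_on_insert_pair_cases
    [OF subset_trans[OF assms(3,4)] assms(5,6), of Q])
  case 1
  then have "\<forall>s\<in>configs_const_on V Q D. s u = s v"
    using configs_const_on_antimono[OF \<open>C \<subseteq> D\<close>, of V Q] by blast
  with 1 show ?thesis by (simp add: configs_const_on_insert_pair_eq)
next
  case 2
  have "card (configs_const_on V Q D) \<le> card Q * card (configs_const_on V Q (insert {u, v} D))"
    using card_configs_const_on_le_insert_pair[OF assms(4,5,6,1,2)] .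
  then show ?thesis
    unfolding 2 by (simp add: mult.assoc mult.left_commute[of "card Q"])
qed

lemma card_configs_const_on_Un_mono:
  assumes "finite V" "finite Q" "Q \<noteq> {}" "C \<subseteq> D" "D \<subseteq> Pow V"
    and "finite F" "F \<subseteq> vertex_pairs V"
  shows "card (configs_const_on V Q D) * card (configs_const_on V Q (C \<union> F))
       \<le> card (configs_const_on V Q C) * card (configs_const_on V Q (D \<union> F))"
  using \<open>finite F\<close> \<open>F \<subseteq> vertex_pairs V\<close>
proof (induction F rule: finite_induct)
  case empty
  then show ?case by simp
next
  case (insert e F)
  let ?N = "\<lambda>C. card (configs_const_on V Q C)"
  obtain u v where uv: "e = {u, v}" "u \<in> V" "v \<in> V"
    using insert.prems unfolding vertex_pairs_def by auto
  have DF: "D \<union> F \<subseteq> Pow V" "C \<union> F \<subseteq> D \<union> F"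
    using assms(4,5) insert.prems vertex_pairs_subset_Pow[of V] by auto
  have IH: "?N D * ?N (C \<union> F) \<le> ?N C * ?N (D \<union> F)"
    using insert by simp
  have step: "?N (D \<union> F) * ?N (insert e (C \<union> F)) \<le> ?N (C \<union> F) * ?N (insert e (D \<union> F))"
    unfolding uv(1) using card_configs_const_on_insert_pair_mono[OF assms(2,3) DF(2,1) uv(2,3)] .
  have pos: "?N (C \<union> F) * ?N (D \<union> F) > 0"
    using card_configs_const_on_pos[OF assms(1-3)] DF by (simp add: subset_trans)
  have "(?N D * ?N (insert e (C \<union> F))) * (?N (C \<union> F) * ?N (D \<union> F))
      = (?N D * ?N (C \<union> F)) * (?N (D \<union> F) * ?N (insert e (C \<union> F)))"
    by (simp add: ac_simps)
  also have "\<dots> \<le> (?N C * ?N (D \<union> F)) * (?N (C \<union> F) * ?N (insert e (D \<union> F)))"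
    using mult_le_mono[OF IH step] .
  also have "\<dots> = (?N C * ?N (insert e (D \<union> F))) * (?N (C \<union> F) * ?N (D \<union> F))"
    by (simp add: ac_simps)
  finally show ?case using pos by simp
qed

lemma card_configs_const_on_supermodular:
  assumes "finite V" "finite Q" "Q \<noteq> {}"
    and "finite C" "C \<subseteq> vertex_pairs V" "D \<subseteq> Pow V"
  shows "card (configs_const_on V Q C) * card (configs_const_on V Q D)
       \<le> card (configs_const_on V Q (C \<union> D)) * card (configs_const_on V Q (C \<inter> D))"
proof -
  have "card (configs_const_on V Q D) * card (configs_const_on V Q ((C \<inter> D) \<union> (C - D)))
      \<le> card (configs_const_on V Q (C \<inter> D)) * card (configs_const_on V Q (D \<union> (C - D)))"
    by (rule card_configs_const_on_Un_mono) (use assms in auto)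
  moreover have "(C \<inter> D) \<union> (C - D) = C" "D \<union> (C - D) = C \<union> D" by auto
  ultimately show ?thesis by (simp add: mult.commute)
qed

lemma card_configs_const_on_Un_Un_le:
  assumes "finite V" "finite Q" "Q \<noteq> {}"
    and "finite (a \<union> C)" "a \<union> C \<subseteq> vertex_pairs V" "b \<union> D \<subseteq> Pow V"
  shows "card (configs_const_on V Q (a \<union> C)) * card (configs_const_on V Q (b \<union> D))
       \<le> card (configs_const_on V Q (a \<union> b \<union> (C \<union> D))) * card (configs_const_on V Q (a \<inter> b))"
proof -
  have "card (configs_const_on V Q (a \<union> C)) * card (configs_const_on V Q (b \<union> D))
      \<le> card (configs_const_on V Q ((a \<union> C) \<union> (b \<union> D)))
        * card (configs_const_on V Q ((a \<union> C) \<inter> (b \<union> D)))"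
    by (rule card_configs_const_on_supermodular[OF assms])
  also have "(a \<union> C) \<union> (b \<union> D) = a \<union> b \<union> (C \<union> D)" by blast
  also have "card (configs_const_on V Q ((a \<union> C) \<inter> (b \<union> D)))
      \<le> card (configs_const_on V Q (a \<inter> b))"
    by (rule card_mono[OF finite_configs_const_on[OF assms(1,2)] configs_const_on_antimono]) blast
  finally show ?thesis by simp
qed

lemma four_functions_two_point:
  fixes a0 a1 b0 b1 c0 c1 d0 d1 :: real
  assumes "a0 \<ge> 0" "a1 \<ge> 0" "b0 \<ge> 0" "b1 \<ge> 0" "c0 \<ge> 0" "c1 \<ge> 0" "d0 \<ge> 0" "d1 \<ge> 0"
    and h00: "a0 * b0 \<le> c0 * d0" and h01: "a0 * b1 \<le> c1 * d0"
    and h10: "a1 * b0 \<le> c1 * d0" and h11: "a1 * b1 \<le> c1 * d1"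
  shows "(a0 + a1) * (b0 + b1) \<le> (c0 + c1) * (d0 + d1)"
proof (cases "c1 * d0 = 0")
  case True
  then have "a0 * b1 = 0" "a1 * b0 = 0"
    using h01 h10 assms(1-4) by (metis antisym mult_nonneg_nonneg)+
  moreover have "0 \<le> c0 * d1" "0 \<le> c1 * d0" using assms(5-8) by auto
  ultimately show ?thesis
    using h00 h11 unfolding distrib_left distrib_right by linarith
next
  case False
  define X where "X = c1 * d0"
  have "X > 0" using False assms(6,7) unfolding X_def by (simp add: less_le)
  text \<open>Since (X - a0 b1)(X - a1 b0) \<ge> 0 and a0 b1 a1 b0 = (a0 b0)(a1 b1) \<le> X c0 d1,
    the cross terms satisfy X (a0 b1 + a1 b0) \<le> X (X + c0 d1).\<close>
  have "(a0 * b1) * (a1 * b0) \<le> X * (c0 * d1)"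
  proof -
    have "(a0 * b1) * (a1 * b0) = (a0 * b0) * (a1 * b1)" by (simp add: algebra_simps)
    also have "\<dots> \<le> (c0 * d0) * (c1 * d1)" using mult_mono[OF h00 h11] assms by simp
    also have "\<dots> = X * (c0 * d1)" unfolding X_def by (simp add: algebra_simps)
    finally show ?thesis .
  qed
  moreover have "(X - a0 * b1) * (X - a1 * b0) \<ge> 0"
    using h01 h10 unfolding X_def by (intro mult_nonneg_nonneg) auto
  ultimately have "X * (a0 * b1 + a1 * b0) \<le> X * (X + c0 * d1)"
    by (simp add: algebra_simps)
  then have "a0 * b1 + a1 * b0 \<le> X + c0 * d1" using \<open>X > 0\<close> by simp
  then show ?thesis using h00 h11 unfolding X_def by (simp add: algebra_simps)
qed

lemma sum_Pow_insert:
  assumes "finite F" "x \<notin> F"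
  shows "(\<Sum>a\<in>Pow (insert x F). h a) = (\<Sum>a\<in>Pow F. h a + h (insert x a))"
proof -
  have "inj_on (insert x) (Pow F)" using assms(2) by (auto simp: inj_on_def)
  moreover have "Pow F \<inter> insert x ` Pow F = {}" using assms(2) by auto
  ultimately show ?thesis
    unfolding Pow_insert using assms(1)
    by (simp add: sum.union_disjoint sum.reindex sum.distrib)
qed

theorem four_functions:
  fixes \<alpha> \<beta> \<gamma> \<delta> :: "'a set \<Rightarrow> real"
  assumes "finite S"
    and "\<And>a. a \<subseteq> S \<Longrightarrow> 0 \<le> \<alpha> a" "\<And>a. a \<subseteq> S \<Longrightarrow> 0 \<le> \<beta> a"
    and "\<And>a. a \<subseteq> S \<Longrightarrow> 0 \<le> \<gamma> a" "\<And>a. a \<subseteq> S \<Longrightarrow> 0 \<le> \<delta> a"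
    and "\<And>a b. a \<subseteq> S \<Longrightarrow> b \<subseteq> S \<Longrightarrow> \<alpha> a * \<beta> b \<le> \<gamma> (a \<union> b) * \<delta> (a \<inter> b)"
  shows "(\<Sum>a\<in>Pow S. \<alpha> a) * (\<Sum>a\<in>Pow S. \<beta> a) \<le> (\<Sum>a\<in>Pow S. \<gamma> a) * (\<Sum>a\<in>Pow S. \<delta> a)"
  using assms
proof (induction S arbitrary: \<alpha> \<beta> \<gamma> \<delta> rule: finite_induct)
  case empty
  then show ?case by simp
next
  case (insert x F)
  let ?lift = "\<lambda>f a. f a + f (insert x a) :: real"
  have "(\<Sum>a\<in>Pow F. ?lift \<alpha> a) * (\<Sum>a\<in>Pow F. ?lift \<beta> a)
      \<le> (\<Sum>a\<in>Pow F. ?lift \<gamma> a) * (\<Sum>a\<in>Pow F. ?lift \<delta> a)"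
  proof (rule insert.IH)
    fix a b assume "a \<subseteq> F" "b \<subseteq> F"
    then have "x \<notin> a" "x \<notin> b" "a \<subseteq> insert x F" "b \<subseteq> insert x F"
      "insert x a \<subseteq> insert x F" "insert x b \<subseteq> insert x F"
      using insert.hyps by auto
    then show "?lift \<alpha> a * ?lift \<beta> b \<le> ?lift \<gamma> (a \<union> b) * ?lift \<delta> (a \<inter> b)"
      using insert.prems(5)[of a b] insert.prems(5)[of a "insert x b"]
        insert.prems(5)[of "insert x a" b] insert.prems(5)[of "insert x a" "insert x b"]
      by (intro four_functions_two_point)
        (auto intro: insert.prems(1-4) simp: Int_insert_left Int_insert_right)
  qed (auto intro!: add_nonneg_nonneg insert.prems(1-4))
  then show ?case by (simp only: sum_Pow_insert[OF insert.hyps])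
qed

lemma finite_graph_finite_edges: "finite_graph V E \<Longrightarrow> finite E"
  unfolding finite_graph_def by (meson Pow_iff finite_Pow_iff finite_subset subsetI)

lemma finite_graph_edges_subset_vertex_pairs:
  assumes "finite_graph V E"
  shows "E \<subseteq> vertex_pairs V"
proof
  fix e assume "e \<in> E"
  then have "card e = 2" "e \<subseteq> V" using assms unfolding finite_graph_def by auto
  then obtain u v where "e = {u, v}" "u \<in> V" "v \<in> V" by (auto simp: card_2_iff)
  then show "e \<in> vertex_pairs V" unfolding vertex_pairs_def by blast
qed

lemma prod_of_bool_eq:
  "finite X \<Longrightarrow> (\<Prod>x\<in>X. of_bool (P x) :: 'a :: comm_semiring_1) = of_bool (\<forall>x\<in>X. P x)"
  by (induction X rule: finite_induct) auto

lemma potts_weight_eq_prod: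
  assumes "finite_graph V E"
  shows "potts_weight J E s = (\<Prod>e\<in>E. exp (-J) + (1 - exp (-J)) * of_bool (const_on s e))"
proof -
  have "{e \<in> E. \<exists>v1 v2. e = {v1, v2} \<and> s v1 \<noteq> s v2} = {e \<in> E. \<not> const_on s e}"
    using finite_graph_edges_subset_vertex_pairs[OF assms]
    unfolding const_on_def vertex_pairs_def by blast
  moreover have "(\<Prod>e\<in>E. exp (-J) + (1 - exp (-J)) * of_bool (const_on s e))
      = (\<Prod>e\<in>E. if \<not> const_on s e then exp (-J) else 1)"
    by (intro prod.cong) auto
  ultimately show ?thesis
    using finite_graph_finite_edges[OF assms]
    by (simp add: potts_weight_def prod.If_cases exp_of_nat_mult[symmetric] mult.commute Int_def)
qed

definition cluster_weight :: "real \<Rightarrow> 'v set set \<Rightarrow> 'v set set \<Rightarrow> real" where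
  "cluster_weight J E \<omega> = (1 - exp (-J)) ^ card \<omega> * exp (-J) ^ card (E - \<omega>)"

lemma cluster_weight_nonneg: "J \<ge> 0 \<Longrightarrow> 0 \<le> cluster_weight J E \<omega>"
  unfolding cluster_weight_def by simp

lemma cluster_weight_Un_Int:
  assumes "finite E" "a \<subseteq> E" "b \<subseteq> E"
  shows "cluster_weight J E a * cluster_weight J E b
       = cluster_weight J E (a \<union> b) * cluster_weight J E (a \<inter> b)"
proof -
  have "finite a" "finite b" using assms finite_subset by auto
  then have "card a + card b = card (a \<union> b) + card (a \<inter> b)"
    by (rule card_Un_Int)
  moreover have "card (E - a) + card (E - b) = card (E - (a \<union> b)) + card (E - (a \<inter> b))"
    using card_Un_Int[of "E - a" "E - b"] assms(1) by (simp add: Diff_Un Diff_Int add.commute)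
  ultimately show ?thesis
    unfolding cluster_weight_def by (simp add: power_add[symmetric] ac_simps)
qed

lemma potts_weight_random_cluster:
  assumes "finite_graph V E"
  shows "potts_weight J E s = (\<Sum>\<omega>\<in>Pow E. cluster_weight J E \<omega> * of_bool (\<forall>e\<in>\<omega>. const_on s e))"
proof -
  have "finite E" using finite_graph_finite_edges[OF assms] .
  have "potts_weight J E s = (\<Prod>e\<in>E. (1 - exp (-J)) * of_bool (const_on s e) + exp (-J))"
    unfolding potts_weight_eq_prod[OF assms] by (simp add: add.commute)
  also have "\<dots> = (\<Sum>\<omega>\<in>Pow E. (\<Prod>e\<in>\<omega>. (1 - exp (-J)) * of_bool (const_on s e)) * (\<Prod>e\<in>E - \<omega>. exp (-J)))"
    by (rule prod_add[OF \<open>finite E\<close>])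
  also have "\<dots> = (\<Sum>\<omega>\<in>Pow E. cluster_weight J E \<omega> * of_bool (\<forall>e\<in>\<omega>. const_on s e))"
    unfolding cluster_weight_def using \<open>finite E\<close>
    by (intro sum.cong refl) (auto simp: prod.distrib prod_of_bool_eq finite_subset)
  finally show ?thesis .
qed

definition potts_mass :: "real \<Rightarrow> 'v set \<Rightarrow> 'v set set \<Rightarrow> 'q set \<Rightarrow> 'v set set \<Rightarrow> real" where
  "potts_mass J V E Q C = (\<Sum>s\<in>configs_const_on V Q C. potts_weight J E s)"

lemma potts_prob_eq_potts_mass:
  "potts_prob J V E Q (\<lambda>s. \<forall>e\<in>C. const_on s e) = potts_mass J V E Q C / potts_mass J V E Q {}"
  unfolding potts_prob_def potts_Z_def potts_mass_def configs_const_on_def by simp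

lemma potts_mass_pos:
  assumes "finite V" "finite Q" "Q \<noteq> {}" "C \<subseteq> Pow V"
  shows "potts_mass J V E Q C > 0"
  unfolding potts_mass_def potts_weight_def
  using card_configs_const_on_pos[OF assms] finite_configs_const_on[OF assms(1,2)]
  by (intro sum_pos) auto

lemma potts_mass_random_cluster:
  assumes "finite_graph V E" "finite Q"
  shows "potts_mass J V E Q C
       = (\<Sum>\<omega>\<in>Pow E. cluster_weight J E \<omega> * card (configs_const_on V Q (\<omega> \<union> C)))"
proof -
  have fin: "finite (configs_const_on V Q C)"
    using assms finite_configs_const_on unfolding finite_graph_def by blast
  have "configs_const_on V Q C \<inter> {s. \<forall>e\<in>\<omega>. const_on s e} = configs_const_on V Q (\<omega> \<union> C)" for \<omega>
    unfolding configs_const_on_def by auto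
  then show ?thesis
    unfolding potts_mass_def potts_weight_random_cluster[OF assms(1)] sum.swap[of _ "Pow E"]
    using fin by (simp add: sum_distrib_left[symmetric])
qed

lemma potts_mass_FKG:
  assumes "finite_graph V E" "finite Q" "Q \<noteq> {}" "J \<ge> 0"
    and "finite C" "C \<subseteq> vertex_pairs V" "finite D" "D \<subseteq> vertex_pairs V"
  shows "potts_mass J V E Q C * potts_mass J V E Q D
       \<le> potts_mass J V E Q (C \<union> D) * potts_mass J V E Q {}"
proof -
  let ?w = "cluster_weight J E" and ?N = "\<lambda>C. real (card (configs_const_on V Q C))"
  have "finite V" using assms(1) unfolding finite_graph_def by simp
  have "finite E" "E \<subseteq> vertex_pairs V"
    using finite_graph_finite_edges[OF assms(1)] finite_graph_edges_subset_vertex_pairs[OF assms(1)]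
    by auto
  have cross: "?w a * ?N (a \<union> C) * (?w b * ?N (b \<union> D))
      \<le> ?w (a \<union> b) * ?N (a \<union> b \<union> (C \<union> D)) * (?w (a \<inter> b) * ?N (a \<inter> b))"
    if "a \<subseteq> E" "b \<subseteq> E" for a b
  proof -
    have fin: "finite (a \<union> C)" using that \<open>finite E\<close> assms(5) finite_subset by blast
    have pairs: "a \<union> C \<subseteq> vertex_pairs V" "b \<union> D \<subseteq> Pow V"
      using that assms(6,8) \<open>E \<subseteq> vertex_pairs V\<close> vertex_pairs_subset_Pow[of V] by blast+
    have "?N (a \<union> C) * ?N (b \<union> D) \<le> ?N (a \<union> b \<union> (C \<union> D)) * ?N (a \<inter> b)"
      using card_configs_const_on_Un_Un_le[OF \<open>finite V\<close> assms(2,3) fin pairs]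
      by (simp only: of_nat_mult[symmetric] of_nat_le_iff)
    then have "(?w a * ?w b) * (?N (a \<union> C) * ?N (b \<union> D))
        \<le> (?w a * ?w b) * (?N (a \<union> b \<union> (C \<union> D)) * ?N (a \<inter> b))"
      by (rule mult_left_mono) (intro mult_nonneg_nonneg cluster_weight_nonneg assms(4))
    also have "\<dots> = ?w (a \<union> b) * ?N (a \<union> b \<union> (C \<union> D)) * (?w (a \<inter> b) * ?N (a \<inter> b))"
      using cluster_weight_Un_Int[OF \<open>finite E\<close> that] by (simp add: ac_simps)
    finally show ?thesis by (simp add: ac_simps)
  qed
  have "(\<Sum>\<omega>\<in>Pow E. ?w \<omega> * ?N (\<omega> \<union> C)) * (\<Sum>\<omega>\<in>Pow E. ?w \<omega> * ?N (\<omega> \<union> D))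
      \<le> (\<Sum>\<omega>\<in>Pow E. ?w \<omega> * ?N (\<omega> \<union> (C \<union> D))) * (\<Sum>\<omega>\<in>Pow E. ?w \<omega> * ?N \<omega>)"
  proof (rule four_functions[OF \<open>finite E\<close>])
    fix a b assume "a \<subseteq> E" "b \<subseteq> E"
    then show "?w a * ?N (a \<union> C) * (?w b * ?N (b \<union> D))
        \<le> ?w (a \<union> b) * ?N (a \<union> b \<union> (C \<union> D)) * (?w (a \<inter> b) * ?N (a \<inter> b))"
      by (rule cross)
  qed (simp_all add: cluster_weight_nonneg[OF assms(4)])
  then show ?thesis
    by (simp add: potts_mass_random_cluster[OF assms(1,2)])
qed

lemma potts_mass_le_insert_pair:
  assumes "finite_graph V E" "finite Q" "Q \<noteq> {}" "J \<ge> 0"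
    and "C \<subseteq> Pow V" "u \<in> V" "v \<in> V"
  shows "potts_mass J V E Q C \<le> card Q * potts_mass J V E Q (insert {u, v} C)"
proof -
  have "E \<subseteq> Pow V"
    using finite_graph_edges_subset_vertex_pairs[OF assms(1)] vertex_pairs_subset_Pow by blast
  have "cluster_weight J E \<omega> * card (configs_const_on V Q (\<omega> \<union> C))
      \<le> card Q * (cluster_weight J E \<omega> * card (configs_const_on V Q (\<omega> \<union> insert {u, v} C)))"
    if "\<omega> \<subseteq> E" for \<omega>
  proof -
    have "card (configs_const_on V Q (\<omega> \<union> C))
        \<le> card Q * card (configs_const_on V Q (insert {u, v} (\<omega> \<union> C)))"
      using that \<open>E \<subseteq> Pow V\<close> assms(2,3,5-7)
      by (intro card_configs_const_on_le_insert_pair) auto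
    then have "real (card (configs_const_on V Q (\<omega> \<union> C)))
        \<le> card Q * real (card (configs_const_on V Q (\<omega> \<union> insert {u, v} C)))"
      by (metis Un_insert_right of_nat_le_iff of_nat_mult)
    from mult_left_mono[OF this cluster_weight_nonneg[OF assms(4)]] show ?thesis
      by (simp only: ac_simps)
  qed
  then show ?thesis
    unfolding potts_mass_random_cluster[OF assms(1,2)] sum_distrib_left
    by (intro sum_mono) simp
qed

lemma potts_prob_nonneg: "0 \<le> potts_prob J V E Q P"
  unfolding potts_prob_def potts_Z_def potts_weight_def by (simp add: sum_nonneg)

lemma potts_prob_FKG:
  assumes "finite_graph V E" "finite Q" "Q \<noteq> {}" "J \<ge> 0"
    and "finite C" "C \<subseteq> vertex_pairs V" "finite D" "D \<subseteq> vertex_pairs V"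
  shows "potts_prob J V E Q (\<lambda>s. \<forall>e\<in>C. const_on s e) * potts_prob J V E Q (\<lambda>s. \<forall>e\<in>D. const_on s e)
       \<le> potts_prob J V E Q (\<lambda>s. \<forall>e\<in>C \<union> D. const_on s e)"
proof -
  have "potts_mass J V E Q {} > 0"
    using assms(1-3) potts_mass_pos unfolding finite_graph_def by blast
  then show ?thesis
    unfolding potts_prob_eq_potts_mass using potts_mass_FKG[OF assms]
    by (simp add: field_simps power2_eq_square)
qed

lemma potts_prob_le_insert_pair:
  assumes "finite_graph V E" "finite Q" "Q \<noteq> {}" "J \<ge> 0"
    and "C \<subseteq> Pow V" "u \<in> V" "v \<in> V"
  shows "potts_prob J V E Q (\<lambda>s. \<forall>e\<in>C. const_on s e)
       \<le> card Q * potts_prob J V E Q (\<lambda>s. \<forall>e\<in>insert {u, v} C. const_on s e)"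
proof -
  have "potts_mass J V E Q {} > 0"
    using assms(1-3) potts_mass_pos unfolding finite_graph_def by blast
  then show ?thesis
    unfolding potts_prob_eq_potts_mass using potts_mass_le_insert_pair[OF assms]
    by (simp add: field_simps)
qed

definition star_pairs :: "'v set \<Rightarrow> 'v set set" where
  "star_pairs A = (\<lambda>x. {SOME a. a \<in> A, x}) ` A"

lemma const_on_pair: "const_on s {a, b} \<longleftrightarrow> s a = s b"
  unfolding const_on_def by auto

lemma const_on_empty: "const_on s {}"
  unfolding const_on_def by blast

lemma const_on_iff_star_pairs: "const_on s A \<longleftrightarrow> (\<forall>e\<in>star_pairs A. const_on s e)"
proof (cases "A = {}")
  case False
  define a0 where "a0 = (SOME a. a \<in> A)"
  have "a0 \<in> A" using False unfolding a0_def by (simp add: some_in_eq)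
  have "(\<forall>e\<in>star_pairs A. const_on s e) \<longleftrightarrow> (\<forall>x\<in>A. s a0 = s x)"
    unfolding star_pairs_def a0_def[symmetric] by (simp add: const_on_pair)
  also have "\<dots> \<longleftrightarrow> const_on s A"
    using \<open>a0 \<in> A\<close> unfolding const_on_def by metis
  finally show ?thesis by simp
qed (simp add: star_pairs_def const_on_def)

lemma star_pairs_subset_vertex_pairs:
  assumes "A \<subseteq> V"
  shows "star_pairs A \<subseteq> vertex_pairs V"
proof
  fix e assume "e \<in> star_pairs A"
  then obtain x where "x \<in> A" "e = {SOME a. a \<in> A, x}" unfolding star_pairs_def by blast
  moreover from \<open>x \<in> A\<close> have "(SOME a. a \<in> A) \<in> A" by (rule someI)
  ultimately show "e \<in> vertex_pairs V" using assms unfolding vertex_pairs_def by blast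
qed

lemma finite_star_pairs: "finite A \<Longrightarrow> finite (star_pairs A)"
  unfolding star_pairs_def by simp

lemma const_on_Un_iff:
  assumes "a \<in> A" "b \<in> B"
  shows "const_on s (A \<union> B) \<longleftrightarrow> const_on s A \<and> const_on s B \<and> s a = s b"
proof
  assume "const_on s (A \<union> B)"
  then show "const_on s A \<and> const_on s B \<and> s a = s b"
    using assms unfolding const_on_def by blast
next
  assume *: "const_on s A \<and> const_on s B \<and> s a = s b"
  show "const_on s (A \<union> B)" unfolding const_on_def
  proof (intro ballI)
    fix x y assume "x \<in> A \<union> B" "y \<in> A \<union> B"
    then have "s x = s a" "s y = s a" using * assms unfolding const_on_def by (metis UnE)+
    then show "s x = s y" by simp
  qed
qed

lemma potts_prob_const_on_FKG:
  assumes "finite_graph V E" "finite Q" "Q \<noteq> {}" "J \<ge> 0" "A \<subseteq> V" "B \<subseteq> V"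
  shows "potts_prob J V E Q (\<lambda>s. const_on s A) * potts_prob J V E Q (\<lambda>s. const_on s B)
       \<le> potts_prob J V E Q (\<lambda>s. const_on s A \<and> const_on s B)"
proof -
  have "finite V" using assms(1) unfolding finite_graph_def by simp
  then have "finite (star_pairs A)" "star_pairs A \<subseteq> vertex_pairs V"
    "finite (star_pairs B)" "star_pairs B \<subseteq> vertex_pairs V"
    using assms(5,6) finite_subset finite_star_pairs star_pairs_subset_vertex_pairs by metis+
  from potts_prob_FKG[OF assms(1-4) this] show ?thesis
    by (simp add: ball_Un const_on_iff_star_pairs[of _ A] const_on_iff_star_pairs[of _ B])
qed

lemma potts_prob_const_on_Un:
  assumes "finite_graph V E" "finite Q" "Q \<noteq> {}" "J \<ge> 0" "A \<subseteq> V" "B \<subseteq> V"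
  shows "potts_prob J V E Q (\<lambda>s. const_on s A \<and> const_on s B)
       \<le> card Q * potts_prob J V E Q (\<lambda>s. const_on s (A \<union> B))"
proof (cases "A = {} \<or> B = {}")
  case True
  then have union_event: "const_on s (A \<union> B) \<longleftrightarrow> const_on s A \<and> const_on s B" for s
    by (elim disjE) (simp_all add: const_on_empty)
  have "card Q \<ge> 1" using assms(2,3) by (simp add: Suc_le_eq card_gt_0_iff)
  then have "1 * potts_prob J V E Q (\<lambda>s. const_on s A \<and> const_on s B)
      \<le> card Q * potts_prob J V E Q (\<lambda>s. const_on s A \<and> const_on s B)"
    by (intro mult_right_mono potts_prob_nonneg) simp
  then show ?thesis unfolding union_event by simp
next
  case False
  then obtain a b where "a \<in> A" "b \<in> B" by auto
  let ?S = "star_pairs A \<union> star_pairs B"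
  have events: "const_on s (A \<union> B) \<longleftrightarrow> (\<forall>e\<in>insert {a, b} ?S. const_on s e)"
    "const_on s A \<and> const_on s B \<longleftrightarrow> (\<forall>e\<in>?S. const_on s e)" for s
    using const_on_Un_iff[OF \<open>a \<in> A\<close> \<open>b \<in> B\<close>, of s]
      const_on_iff_star_pairs[of s A] const_on_iff_star_pairs[of s B]
    by (simp_all add: const_on_pair ball_Un conj_ac)
  have "?S \<subseteq> Pow V"
    using assms(5,6) star_pairs_subset_vertex_pairs vertex_pairs_subset_Pow by blast
  moreover have "a \<in> V" "b \<in> V" using \<open>a \<in> A\<close> \<open>b \<in> B\<close> assms(5,6) by auto
  ultimately show ?thesis
    unfolding events by (rule potts_prob_le_insert_pair[OF assms(1-4)])
qed

theorem lemma4p3: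
  fixes V :: "'v set" and E :: "'v set set" and Q :: "'q set"
    and q :: nat and J :: real and A B :: "'v set"
  assumes "finite_graph V E"
    and "finite Q" and "card Q = q" and "q \<ge> 1"
    and "J \<ge> 0"
    and "A \<subseteq> V" and "B \<subseteq> V"
  shows "potts_prob J V E Q (\<lambda>s. const_on s A \<and> const_on s B)
           \<ge> potts_prob J V E Q (\<lambda>s. const_on s A) * potts_prob J V E Q (\<lambda>s. const_on s B)
       \<and> potts_prob J V E Q (\<lambda>s. const_on s (A \<union> B))
           \<ge> (1 / real q) * potts_prob J V E Q (\<lambda>s. const_on s A \<and> const_on s B)"
proof -
  have "Q \<noteq> {}" using assms(2-4) by auto
  note FKG = potts_prob_const_on_FKG[OF assms(1,2) \<open>Q \<noteq> {}\<close> assms(5-7)]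
  note union = potts_prob_const_on_Un[OF assms(1,2) \<open>Q \<noteq> {}\<close> assms(5-7)]
  show ?thesis using FKG union assms(3,4) by (simp add: field_simps)
qed

end
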